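(* Let $A$ be an abelian group which is not cotorsion and let $\lambda>\aleph_0$ be a cardinal. Then there exist a directed poset $\mathcal{T}$ with $|\mathcal{T}|=\lambda$ and a diagram $X:\mathcal{T}\to\mathbf{Set}^f_*$ of finite pointed sets such that $H(X,A)$ is not cotorsion.
   Context: A directed poset is regarded as a category with a single morphism $t\to s$ whenever $t\ge s$. For a pointed set $Y$, $Y\wedge A:=\bigoplus_{Y\setminus\{*\}}A$ (finitely supported pointed maps $Y\to A$), functorial via $f_*(sv)=f(s)v$, where $sv$ is the element with value $v$ at $s$ ($*v=0$). $H(X,A):=\lim_\mathcal{T}(X\wedge A)/\mathrm{Im}\,\rho$, where $\rho:(\lim_\mathcal{T}X)\wedge A\to\lim_\mathcal{T}(X\wedge A)$, $\rho(xv)(t)=x(t)v$. A group $C$ is cotorsion if $\mathrm{Ext}(\mathbb{Q},C)=0$. *)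

theory Defs
  imports "HOL-Algebra.Algebra" "HOL-Library.Equipollence"
begin

definition Qgroup :: "rat monoid" where
  "Qgroup = \<lparr>carrier = UNIV, monoid.mult = (+), monoid.one = 0\<rparr>"

text \<open>C is cotorsion iff Ext(Q,C) = 0, i.e. every abelian extension
  0 -> C -> E -> Q -> 0 splits.  Every such extension is isomorphic (as an extension)
  to one whose underlying set is carrier C x Q, with inclusion c -> (c,0) and
  projection snd; so we quantify over exactly those.\<close>

definition cotorsion :: "('c, 'm) monoid_scheme \<Rightarrow> bool" where
  "cotorsion C \<longleftrightarrow>
     (\<forall>E :: ('c \<times> rat) monoid.
        comm_group E \<and> carrier E = carrier C \<times> (UNIV :: rat set)
        \<and> (\<lambda>c. (c, 0)) \<in> hom C E \<and> snd \<in> hom E Qgroup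
        \<longrightarrow> (\<exists>s \<in> hom Qgroup E. \<forall>q. snd (s q) = q))"

definition smash :: "'y set \<Rightarrow> 'y \<Rightarrow> ('a, 'm) monoid_scheme \<Rightarrow> ('y \<Rightarrow> 'a) set" where
  "smash Y y0 A = {\<phi> \<in> Y \<rightarrow>\<^sub>E carrier A. \<phi> y0 = \<one>\<^bsub>A\<^esub> \<and> finite {y \<in> Y. \<phi> y \<noteq> \<one>\<^bsub>A\<^esub>}}"

definition smash_group :: "'y set \<Rightarrow> 'y \<Rightarrow> ('a, 'm) monoid_scheme \<Rightarrow> ('y \<Rightarrow> 'a) monoid" where
  "smash_group Y y0 A = \<lparr>carrier = smash Y y0 A,
      monoid.mult = (\<lambda>\<phi> \<psi>. \<lambda>y\<in>Y. monoid.mult A (\<phi> y) (\<psi> y)),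
      monoid.one = (\<lambda>y\<in>Y. \<one>\<^bsub>A\<^esub>)\<rparr>"

text \<open>Functoriality: f_*(s v) = f(s) v, extended additively.\<close>
definition smash_map :: "'y set \<Rightarrow> 'z set \<Rightarrow> 'z \<Rightarrow> ('y \<Rightarrow> 'z) \<Rightarrow> ('a, 'm) monoid_scheme
    \<Rightarrow> ('y \<Rightarrow> 'a) \<Rightarrow> ('z \<Rightarrow> 'a)" where
  "smash_map Y Z z0 f A \<phi> =
     (\<lambda>z\<in>Z. if z = z0 then \<one>\<^bsub>A\<^esub> else finprod A \<phi> {y \<in> Y. f y = z \<and> \<phi> y \<noteq> \<one>\<^bsub>A\<^esub>})"

definition directed_poset :: "'t set \<Rightarrow> ('t \<Rightarrow> 't \<Rightarrow> bool) \<Rightarrow> bool" where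
  "directed_poset T leq \<longleftrightarrow> T \<noteq> {}
     \<and> (\<forall>t\<in>T. leq t t)
     \<and> (\<forall>s\<in>T. \<forall>t\<in>T. leq s t \<and> leq t s \<longrightarrow> s = t)
     \<and> (\<forall>r\<in>T. \<forall>s\<in>T. \<forall>t\<in>T. leq r s \<and> leq s t \<longrightarrow> leq r t)
     \<and> (\<forall>s\<in>T. \<forall>t\<in>T. \<exists>u\<in>T. leq s u \<and> leq t u)"

definition finite_pointed_diagram :: "'t set \<Rightarrow> ('t \<Rightarrow> 't \<Rightarrow> bool) \<Rightarrow> ('t \<Rightarrow> 'x set) \<Rightarrow> ('t \<Rightarrow> 'x)
    \<Rightarrow> ('t \<Rightarrow> 't \<Rightarrow> 'x \<Rightarrow> 'x) \<Rightarrow> bool" where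
  "finite_pointed_diagram T leq D bp f \<longleftrightarrow>
     (\<forall>t\<in>T. finite (D t) \<and> bp t \<in> D t)
     \<and> (\<forall>s\<in>T. \<forall>t\<in>T. leq s t \<longrightarrow> (\<forall>x\<in>D t. f t s x \<in> D s) \<and> f t s (bp t) = bp s)
     \<and> (\<forall>t\<in>T. \<forall>x\<in>D t. f t t x = x)
     \<and> (\<forall>r\<in>T. \<forall>s\<in>T. \<forall>t\<in>T. leq r s \<and> leq s t \<longrightarrow> (\<forall>x\<in>D t. f s r (f t s x) = f t r x))"

definition plim :: "'t set \<Rightarrow> ('t \<Rightarrow> 't \<Rightarrow> bool) \<Rightarrow> ('t \<Rightarrow> 'x set) \<Rightarrow> ('t \<Rightarrow> 't \<Rightarrow> 'x \<Rightarrow> 'x)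
    \<Rightarrow> ('t \<Rightarrow> 'x) set" where
  "plim T leq D f = {x \<in> (\<Pi>\<^sub>E t\<in>T. D t). \<forall>s\<in>T. \<forall>t\<in>T. leq s t \<longrightarrow> f t s (x t) = x s}"

definition plim_bp :: "'t set \<Rightarrow> ('t \<Rightarrow> 'x) \<Rightarrow> ('t \<Rightarrow> 'x)" where
  "plim_bp T bp = (\<lambda>t\<in>T. bp t)"

definition lim_smash_group :: "'t set \<Rightarrow> ('t \<Rightarrow> 't \<Rightarrow> bool) \<Rightarrow> ('t \<Rightarrow> 'x set) \<Rightarrow> ('t \<Rightarrow> 'x)
    \<Rightarrow> ('t \<Rightarrow> 't \<Rightarrow> 'x \<Rightarrow> 'x) \<Rightarrow> ('a, 'm) monoid_scheme \<Rightarrow> ('t \<Rightarrow> 'x \<Rightarrow> 'a) monoid" where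
  "lim_smash_group T leq D bp f A =
     \<lparr>carrier = {a \<in> (\<Pi>\<^sub>E t\<in>T. smash (D t) (bp t) A).
                  \<forall>s\<in>T. \<forall>t\<in>T. leq s t \<longrightarrow> smash_map (D t) (D s) (bp s) (f t s) A (a t) = a s},
      monoid.mult = (\<lambda>a b. \<lambda>t\<in>T. monoid.mult (smash_group (D t) (bp t) A) (a t) (b t)),
      monoid.one = (\<lambda>t\<in>T. monoid.one (smash_group (D t) (bp t) A))\<rparr>"

definition rho :: "'t set \<Rightarrow> ('t \<Rightarrow> 't \<Rightarrow> bool) \<Rightarrow> ('t \<Rightarrow> 'x set) \<Rightarrow> ('t \<Rightarrow> 'x)
    \<Rightarrow> ('t \<Rightarrow> 't \<Rightarrow> 'x \<Rightarrow> 'x) \<Rightarrow> ('a, 'm) monoid_scheme \<Rightarrow> (('t \<Rightarrow> 'x) \<Rightarrow> 'a) \<Rightarrow> ('t \<Rightarrow> 'x \<Rightarrow> 'a)" where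
  "rho T leq D bp f A \<psi> = (\<lambda>t\<in>T. smash_map (plim T leq D f) (D t) (bp t) (\<lambda>x. x t) A \<psi>)"

definition H_group :: "'t set \<Rightarrow> ('t \<Rightarrow> 't \<Rightarrow> bool) \<Rightarrow> ('t \<Rightarrow> 'x set) \<Rightarrow> ('t \<Rightarrow> 'x)
    \<Rightarrow> ('t \<Rightarrow> 't \<Rightarrow> 'x \<Rightarrow> 'x) \<Rightarrow> ('a, 'm) monoid_scheme \<Rightarrow> ('t \<Rightarrow> 'x \<Rightarrow> 'a) set monoid" where
  "H_group T leq D bp f A =
     lim_smash_group T leq D bp f A Mod
       (rho T leq D bp f A ` smash (plim T leq D f) (plim_bp T bp) A)"

end

theory Submission
  imports Defs
begin

text \<open>Index the diagram by the finite subsets of \<open>K\<close> (there are \<open>|K|\<close> of them) and send a finite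
  set \<open>S\<close> to \<open>S\<close> with a base point adjoined, the maps collapsing the elements outside the smaller
  set. Then \<open>lim X\<close> is \<open>K\<close> with a base point, \<open>lim (X \<and> A) = A\<^sup>K\<close> and the image of \<open>\<rho>\<close> is the
  direct sum, so \<open>H(X,A)\<close> is the reduced power \<open>A\<^sup>K / A\<^sup>(\<^sup>K\<^sup>)\<close>. A non-split extension \<open>E\<close> of
  \<open>\<rat>\<close> by \<open>A\<close> induces coordinatewise an extension of \<open>\<rat>\<close> by this reduced power, and a
  splitting of the latter would be a splitting of \<open>E\<close> at every coordinate outside a countable
  set; as \<open>K\<close> is uncountable, it would split \<open>E\<close>.\<close>

section \<open>Extensions of \<open>\<rat>\<close> by reduced powers\<close>

definition Q_splits :: "('c \<times> rat) monoid \<Rightarrow> bool" where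
  "Q_splits E \<longleftrightarrow> (\<exists>s\<in>hom Qgroup E. \<forall>q. snd (s q) = q)"

lemma cotorsion_iff_Q_splits:
  "cotorsion C \<longleftrightarrow>
     (\<forall>E :: ('c \<times> rat) monoid.
        comm_group E \<and> carrier E = carrier C \<times> UNIV
        \<and> (\<lambda>c. (c, 0)) \<in> hom C E \<and> snd \<in> hom E Qgroup \<longrightarrow> Q_splits E)"
  unfolding cotorsion_def Q_splits_def ..

lemma Qgroup_simps [simp]: "carrier Qgroup = UNIV" "x \<otimes>\<^bsub>Qgroup\<^esub> y = x + y"
  by (simp_all add: Qgroup_def)

lemma comm_group_surj_image:
  fixes G (structure) and M (structure)
  assumes G: "comm_group G" and closed: "\<pi> \<in> carrier G \<rightarrow> carrier M"
    and surj: "carrier M \<subseteq> \<pi> ` carrier G"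
    and mult: "\<And>x y. x \<in> carrier G \<Longrightarrow> y \<in> carrier G \<Longrightarrow> \<pi> (x \<otimes>\<^bsub>G\<^esub> y) = \<pi> x \<otimes>\<^bsub>M\<^esub> \<pi> y"
    and one: "\<pi> \<one>\<^bsub>G\<^esub> = \<one>\<^bsub>M\<^esub>"
  shows "comm_group M"
proof -
  interpret G: comm_group G by (rule G)
  have lift: "\<exists>x'\<in>carrier G. x = \<pi> x'" if "x \<in> carrier M" for x
    using surj that by blast
  show ?thesis
  proof (rule comm_groupI)
    fix x y assume "x \<in> carrier M" "y \<in> carrier M"
    then obtain x' y' where "x' \<in> carrier G" "y' \<in> carrier G" "x = \<pi> x'" "y = \<pi> y'"
      using lift by blast
    then show "x \<otimes>\<^bsub>M\<^esub> y \<in> carrier M" using closed mult by (metis G.m_closed funcset_mem)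
  next
    show "\<one>\<^bsub>M\<^esub> \<in> carrier M" using closed one by (metis G.one_closed funcset_mem)
  next
    fix x y z assume "x \<in> carrier M" "y \<in> carrier M" "z \<in> carrier M"
    then obtain x' y' z' where "x' \<in> carrier G" "y' \<in> carrier G" "z' \<in> carrier G"
      and "x = \<pi> x'" "y = \<pi> y'" "z = \<pi> z'"
      using lift by metis
    then show "x \<otimes>\<^bsub>M\<^esub> y \<otimes>\<^bsub>M\<^esub> z = x \<otimes>\<^bsub>M\<^esub> (y \<otimes>\<^bsub>M\<^esub> z)"
      by (metis G.m_assoc G.m_closed mult)
  next
    fix x y assume "x \<in> carrier M" "y \<in> carrier M"
    then obtain x' y' where "x' \<in> carrier G" "y' \<in> carrier G" "x = \<pi> x'" "y = \<pi> y'"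
      using lift by blast
    then show "x \<otimes>\<^bsub>M\<^esub> y = y \<otimes>\<^bsub>M\<^esub> x" by (metis G.m_comm mult)
  next
    fix x assume "x \<in> carrier M"
    then obtain x' where x': "x' \<in> carrier G" "x = \<pi> x'" using lift by blast
    then show "\<one>\<^bsub>M\<^esub> \<otimes>\<^bsub>M\<^esub> x = x" by (metis G.l_one G.one_closed mult one)
    have "\<pi> (inv\<^bsub>G\<^esub> x') \<in> carrier M" "\<pi> (inv\<^bsub>G\<^esub> x') \<otimes>\<^bsub>M\<^esub> x = \<one>\<^bsub>M\<^esub>"
      using x' closed mult one by (metis G.inv_closed funcset_mem, metis G.inv_closed G.l_inv)
    then show "\<exists>y\<in>carrier M. y \<otimes>\<^bsub>M\<^esub> x = \<one>\<^bsub>M\<^esub>" by blast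
  qed
qed

locale Q_extension = A: comm_group A + E: comm_group E
  for A :: "'a monoid" and E :: "('a \<times> rat) monoid" +
  assumes carrier_E: "carrier E = carrier A \<times> UNIV"
    and incl_hom: "(\<lambda>a. (a, 0)) \<in> hom A E"
    and snd_hom: "snd \<in> hom E Qgroup"
begin

definition emul :: "rat \<Rightarrow> rat \<Rightarrow> 'a \<Rightarrow> 'a \<Rightarrow> 'a" where
  "emul p q a b = fst ((a, p) \<otimes>\<^bsub>E\<^esub> (b, q))"

definition einv :: "rat \<Rightarrow> 'a \<Rightarrow> 'a" where
  "einv p a = fst (inv\<^bsub>E\<^esub> (a, p))"

lemma snd_mult_E: "u \<in> carrier E \<Longrightarrow> v \<in> carrier E \<Longrightarrow> snd (u \<otimes>\<^bsub>E\<^esub> v) = snd u + snd v"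
  by (simp add: hom_mult[OF snd_hom])

lemma mult_E:
  assumes "a \<in> carrier A" "b \<in> carrier A"
  shows "(a, p) \<otimes>\<^bsub>E\<^esub> (b, q) = (emul p q a b, p + q)" and emul_closed: "emul p q a b \<in> carrier A"
proof -
  have ab: "(a, p) \<in> carrier E" "(b, q) \<in> carrier E" using assms by (auto simp: carrier_E)
  have "snd ((a, p) \<otimes>\<^bsub>E\<^esub> (b, q)) = p + q" using snd_mult_E[OF ab] by simp
  moreover have "(a, p) \<otimes>\<^bsub>E\<^esub> (b, q) \<in> carrier E" using ab by simp
  ultimately show "(a, p) \<otimes>\<^bsub>E\<^esub> (b, q) = (emul p q a b, p + q)" "emul p q a b \<in> carrier A"
    by (auto simp: carrier_E emul_def prod_eq_iff)
qed

lemma emul_0_0: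
  assumes "a \<in> carrier A" "b \<in> carrier A" shows "emul 0 0 a b = a \<otimes>\<^bsub>A\<^esub> b"
proof -
  have "(a, 0) \<otimes>\<^bsub>E\<^esub> (b, 0) = (a \<otimes>\<^bsub>A\<^esub> b, 0)" using hom_mult[OF incl_hom assms] by simp
  then show ?thesis by (simp add: emul_def)
qed

lemma one_E: "\<one>\<^bsub>E\<^esub> = (\<one>\<^bsub>A\<^esub>, 0)"
proof -
  have one: "(\<one>\<^bsub>A\<^esub>, 0) \<in> carrier E" by (simp add: carrier_E)
  have "(\<one>\<^bsub>A\<^esub>, 0) \<otimes>\<^bsub>E\<^esub> (\<one>\<^bsub>A\<^esub>, 0) = (\<one>\<^bsub>A\<^esub>, 0)"
    using hom_mult[OF incl_hom A.one_closed A.one_closed] by simp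
  then show ?thesis using E.l_cancel_one[OF one one] by simp
qed

lemma emul_assoc:
  assumes "a \<in> carrier A" "b \<in> carrier A" "c \<in> carrier A"
  shows "emul (p + q) r (emul p q a b) c = emul p (q + r) a (emul q r b c)"
proof -
  have "(a, p) \<otimes>\<^bsub>E\<^esub> (b, q) \<otimes>\<^bsub>E\<^esub> (c, r) = (a, p) \<otimes>\<^bsub>E\<^esub> ((b, q) \<otimes>\<^bsub>E\<^esub> (c, r))"
    using assms by (intro E.m_assoc) (auto simp: carrier_E)
  then show ?thesis using assms by (simp add: mult_E emul_closed)
qed

lemma emul_comm:
  assumes "a \<in> carrier A" "b \<in> carrier A" shows "emul p q a b = emul q p b a"
proof -
  have "(a, p) \<otimes>\<^bsub>E\<^esub> (b, q) = (b, q) \<otimes>\<^bsub>E\<^esub> (a, p)"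
    using assms by (intro E.m_comm) (auto simp: carrier_E)
  then show ?thesis by (simp add: emul_def)
qed

lemma emul_one:
  assumes "b \<in> carrier A" shows "emul 0 q \<one>\<^bsub>A\<^esub> b = b"
proof -
  have "\<one>\<^bsub>E\<^esub> \<otimes>\<^bsub>E\<^esub> (b, q) = (b, q)" using assms by (intro E.l_one) (auto simp: carrier_E)
  then show ?thesis by (simp add: emul_def one_E)
qed

lemma einv:
  assumes "a \<in> carrier A"
  shows "einv p a \<in> carrier A" "emul (- p) p (einv p a) a = \<one>\<^bsub>A\<^esub>"
proof -
  have a: "(a, p) \<in> carrier E" using assms by (simp add: carrier_E)
  have inv_closed: "inv\<^bsub>E\<^esub> (a, p) \<in> carrier E" using a by simp
  have l_inv: "inv\<^bsub>E\<^esub> (a, p) \<otimes>\<^bsub>E\<^esub> (a, p) = \<one>\<^bsub>E\<^esub>" using a by simp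
  have "snd (inv\<^bsub>E\<^esub> (a, p)) + p = 0"
    using snd_mult_E[OF inv_closed a] l_inv by (simp add: one_E)
  then have inv: "inv\<^bsub>E\<^esub> (a, p) = (einv p a, - p)"
    by (simp add: einv_def prod_eq_iff eq_neg_iff_add_eq_0)
  show "einv p a \<in> carrier A" using inv_closed by (simp add: inv carrier_E)
  show "emul (- p) p (einv p a) a = \<one>\<^bsub>A\<^esub>" using l_inv by (simp add: inv emul_def one_E)
qed

text \<open>The subgroup of \<open>E\<^sup>K\<close> of families with constant \<open>\<rat>\<close>-coordinate.\<close>

definition ext_power :: "'k set \<Rightarrow> (('k \<Rightarrow> 'a) \<times> rat) monoid" where
  "ext_power K = \<lparr>carrier = (K \<rightarrow>\<^sub>E carrier A) \<times> UNIV,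
    monoid.mult = (\<lambda>u v. (\<lambda>x\<in>K. emul (snd u) (snd v) (fst u x) (fst v x), snd u + snd v)),
    monoid.one = (\<lambda>x\<in>K. \<one>\<^bsub>A\<^esub>, 0)\<rparr>"

lemma mult_ext_power:
  "(c, p) \<otimes>\<^bsub>ext_power K\<^esub> (d, q) = (\<lambda>x\<in>K. emul p q (c x) (d x), p + q)"
  by (simp add: ext_power_def)

lemma comm_group_ext_power: "comm_group (ext_power K)"
proof (rule comm_groupI)
  fix u v assume "u \<in> carrier (ext_power K)" "v \<in> carrier (ext_power K)"
  then show "u \<otimes>\<^bsub>ext_power K\<^esub> v \<in> carrier (ext_power K)"
    by (auto simp: ext_power_def PiE_iff intro!: emul_closed)
next
  show "\<one>\<^bsub>ext_power K\<^esub> \<in> carrier (ext_power K)" by (auto simp: ext_power_def)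
next
  fix u v w assume "u \<in> carrier (ext_power K)" "v \<in> carrier (ext_power K)" "w \<in> carrier (ext_power K)"
  then obtain c p d q e r where "u = (c, p)" "v = (d, q)" "w = (e, r)"
    and "c \<in> K \<rightarrow>\<^sub>E carrier A" "d \<in> K \<rightarrow>\<^sub>E carrier A" "e \<in> K \<rightarrow>\<^sub>E carrier A"
    by (auto simp: ext_power_def)
  moreover from this
  have "(\<lambda>x\<in>K. emul (p + q) r (emul p q (c x) (d x)) (e x))
      = (\<lambda>x\<in>K. emul p (q + r) (c x) (emul q r (d x) (e x)))"
    by (intro restrict_ext) (simp add: PiE_iff emul_assoc)
  ultimately show "u \<otimes>\<^bsub>ext_power K\<^esub> v \<otimes>\<^bsub>ext_power K\<^esub> w = u \<otimes>\<^bsub>ext_power K\<^esub> (v \<otimes>\<^bsub>ext_power K\<^esub> w)"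
    by (simp add: mult_ext_power add.assoc cong: restrict_cong)
next
  fix u v assume "u \<in> carrier (ext_power K)" "v \<in> carrier (ext_power K)"
  then obtain c p d q where "u = (c, p)" "v = (d, q)"
    and "c \<in> K \<rightarrow>\<^sub>E carrier A" "d \<in> K \<rightarrow>\<^sub>E carrier A"
    by (auto simp: ext_power_def)
  moreover from this
  have "(\<lambda>x\<in>K. emul p q (c x) (d x)) = (\<lambda>x\<in>K. emul q p (d x) (c x))"
    by (intro restrict_ext) (simp add: PiE_iff emul_comm)
  ultimately show "u \<otimes>\<^bsub>ext_power K\<^esub> v = v \<otimes>\<^bsub>ext_power K\<^esub> u"
    by (simp add: mult_ext_power add.commute)
next
  fix u assume "u \<in> carrier (ext_power K)"
  then obtain c p where u: "u = (c, p)" and c: "c \<in> K \<rightarrow>\<^sub>E carrier A"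
    by (auto simp: ext_power_def)
  have "(\<lambda>x\<in>K. emul 0 p \<one>\<^bsub>A\<^esub> (c x)) = c"
    using c by (auto simp: PiE_iff extensional_def emul_one intro!: ext)
  then show "\<one>\<^bsub>ext_power K\<^esub> \<otimes>\<^bsub>ext_power K\<^esub> u = u"
    by (simp add: u ext_power_def cong: restrict_cong)
next
  fix u assume "u \<in> carrier (ext_power K)"
  then obtain c p where u: "u = (c, p)" and c: "c \<in> K \<rightarrow>\<^sub>E carrier A"
    by (auto simp: ext_power_def)
  define v where "v = (\<lambda>x\<in>K. einv p (c x), - p)"
  have "v \<in> carrier (ext_power K)" using c by (auto simp: v_def ext_power_def einv PiE_iff)
  moreover have "v \<otimes>\<^bsub>ext_power K\<^esub> u = \<one>\<^bsub>ext_power K\<^esub>"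
    using c by (auto simp: u v_def ext_power_def einv PiE_iff intro!: restrict_ext)
  ultimately show "\<exists>v\<in>carrier (ext_power K). v \<otimes>\<^bsub>ext_power K\<^esub> u = \<one>\<^bsub>ext_power K\<^esub>" by blast
qed

end

locale reduced_power = A: comm_group A
  for A :: "'a monoid" and K :: "'k set" and H :: "'h monoid" and \<pi> :: "('k \<Rightarrow> 'a) \<Rightarrow> 'h" +
  assumes carrier_H: "carrier H = \<pi> ` (K \<rightarrow> carrier A)"
    and mult_\<pi>: "c \<in> K \<rightarrow> carrier A \<Longrightarrow> d \<in> K \<rightarrow> carrier A
      \<Longrightarrow> \<pi> c \<otimes>\<^bsub>H\<^esub> \<pi> d = \<pi> (\<lambda>x. c x \<otimes>\<^bsub>A\<^esub> d x)"
    and \<pi>_eq_iff: "c \<in> K \<rightarrow> carrier A \<Longrightarrow> d \<in> K \<rightarrow> carrier A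
      \<Longrightarrow> \<pi> c = \<pi> d \<longleftrightarrow> finite {x\<in>K. c x \<noteq> d x}"
begin

definition rep :: "'h \<Rightarrow> 'k \<Rightarrow> 'a" where
  "rep h = (SOME c. c \<in> K \<rightarrow> carrier A \<and> \<pi> c = h)"

lemma rep:
  assumes "c \<in> K \<rightarrow> carrier A"
  shows "rep (\<pi> c) \<in> K \<rightarrow> carrier A" "\<pi> (rep (\<pi> c)) = \<pi> c"
proof -
  have "rep (\<pi> c) \<in> K \<rightarrow> carrier A \<and> \<pi> (rep (\<pi> c)) = \<pi> c"
    unfolding rep_def by (rule someI[of _ c]) (use assms in simp)
  then show "rep (\<pi> c) \<in> K \<rightarrow> carrier A" "\<pi> (rep (\<pi> c)) = \<pi> c" by auto
qed

lemma finite_rep_neq: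
  assumes "c \<in> K \<rightarrow> carrier A" shows "finite {x\<in>K. rep (\<pi> c) x \<noteq> c x}"
  using \<pi>_eq_iff[OF rep(1)[OF assms] assms] rep(2)[OF assms] by simp

lemma \<pi>_restrict: "c \<in> K \<rightarrow> carrier A \<Longrightarrow> \<pi> (restrict c K) = \<pi> c"
  by (subst \<pi>_eq_iff) auto

end

locale reduced_power_extension = reduced_power A K H \<pi> + Q_extension A E
  for A :: "'a monoid" and K :: "'k set" and H :: "'h monoid" and \<pi> and E :: "('a \<times> rat) monoid"
begin

text \<open>The extension of \<open>\<rat>\<close> by \<open>H\<close> obtained from \<open>E\<close> coordinatewise; products are computed on
  representatives, which is harmless because they only matter up to finitely many coordinates.\<close>

definition red_ext :: "('h \<times> rat) monoid" where
  "red_ext = \<lparr>carrier = carrier H \<times> UNIV,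
    monoid.mult = (\<lambda>u v. (\<pi> (\<lambda>x. emul (snd u) (snd v) (rep (fst u) x) (rep (fst v) x)), snd u + snd v)),
    monoid.one = (\<pi> (\<lambda>x. \<one>\<^bsub>A\<^esub>), 0)\<rparr>"

lemma carrier_red_ext: "carrier red_ext = carrier H \<times> UNIV"
  by (simp add: red_ext_def)

lemma mult_red_ext:
  assumes c: "c \<in> K \<rightarrow> carrier A" and d: "d \<in> K \<rightarrow> carrier A"
  shows "(\<pi> c, p) \<otimes>\<^bsub>red_ext\<^esub> (\<pi> d, q) = (\<pi> (\<lambda>x. emul p q (c x) (d x)), p + q)"
proof -
  have "{x\<in>K. emul p q (rep (\<pi> c) x) (rep (\<pi> d) x) \<noteq> emul p q (c x) (d x)}
      \<subseteq> {x\<in>K. rep (\<pi> c) x \<noteq> c x} \<union> {x\<in>K. rep (\<pi> d) x \<noteq> d x}" by auto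
  then have "finite {x\<in>K. emul p q (rep (\<pi> c) x) (rep (\<pi> d) x) \<noteq> emul p q (c x) (d x)}"
    using finite_rep_neq[OF c] finite_rep_neq[OF d] finite_subset by blast
  moreover have "(\<lambda>x. emul p q (rep (\<pi> c) x) (rep (\<pi> d) x)) \<in> K \<rightarrow> carrier A"
    "(\<lambda>x. emul p q (c x) (d x)) \<in> K \<rightarrow> carrier A"
    using rep(1)[OF c] rep(1)[OF d] c d by (auto intro!: emul_closed)
  ultimately show ?thesis by (simp add: red_ext_def \<pi>_eq_iff)
qed

lemma comm_group_red_ext: "comm_group red_ext"
proof (rule comm_group_surj_image[OF comm_group_ext_power, where \<pi> = "\<lambda>u. (\<pi> (fst u), snd u)"])
  show "(\<lambda>u. (\<pi> (fst u), snd u)) \<in> carrier (ext_power K) \<rightarrow> carrier red_ext"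
    by (auto simp: ext_power_def carrier_red_ext carrier_H)
  show "carrier red_ext \<subseteq> (\<lambda>u. (\<pi> (fst u), snd u)) ` carrier (ext_power K)"
  proof
    fix z assume "z \<in> carrier red_ext"
    then obtain c p where c: "c \<in> K \<rightarrow> carrier A" and z: "z = (\<pi> c, p)"
      by (auto simp: carrier_red_ext carrier_H)
    have "(restrict c K, p) \<in> carrier (ext_power K)" using c by (auto simp: ext_power_def)
    moreover have "z = (\<pi> (fst (restrict c K, p)), snd (restrict c K, p))" using z \<pi>_restrict[OF c] by simp
    ultimately show "z \<in> (\<lambda>u. (\<pi> (fst u), snd u)) ` carrier (ext_power K)" by blast
  qed
next
  fix u v assume "u \<in> carrier (ext_power K)" "v \<in> carrier (ext_power K)"
  then obtain c p d q where u: "u = (c, p)" "v = (d, q)"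
    and c: "c \<in> K \<rightarrow> carrier A" and d: "d \<in> K \<rightarrow> carrier A"
    by (auto simp: ext_power_def PiE_iff Pi_iff)
  have "(\<lambda>x. emul p q (c x) (d x)) \<in> K \<rightarrow> carrier A" using c d by (auto intro!: emul_closed)
  then show "(\<pi> (fst (u \<otimes>\<^bsub>ext_power K\<^esub> v)), snd (u \<otimes>\<^bsub>ext_power K\<^esub> v))
      = (\<pi> (fst u), snd u) \<otimes>\<^bsub>red_ext\<^esub> (\<pi> (fst v), snd v)"
    by (simp add: u mult_ext_power mult_red_ext[OF c d] \<pi>_restrict)
next
  show "(\<pi> (fst \<one>\<^bsub>ext_power K\<^esub>), snd \<one>\<^bsub>ext_power K\<^esub>) = \<one>\<^bsub>red_ext\<^esub>"
    using \<pi>_restrict[of "\<lambda>x. \<one>\<^bsub>A\<^esub>"] by (simp add: ext_power_def red_ext_def)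
qed

lemma incl_hom_red_ext: "(\<lambda>h. (h, 0)) \<in> hom H red_ext"
proof (rule homI)
  fix h assume "h \<in> carrier H" then show "(h, 0) \<in> carrier red_ext" by (simp add: carrier_red_ext)
next
  fix h h' assume "h \<in> carrier H" "h' \<in> carrier H"
  then obtain c d where c: "c \<in> K \<rightarrow> carrier A" and d: "d \<in> K \<rightarrow> carrier A"
    and h: "h = \<pi> c" "h' = \<pi> d"
    by (auto simp: carrier_H)
  have no_diff: "{x\<in>K. c x \<otimes>\<^bsub>A\<^esub> d x \<noteq> emul 0 0 (c x) (d x)} = {}"
    using c d by (auto simp: emul_0_0 Pi_iff)
  have closed: "(\<lambda>x. c x \<otimes>\<^bsub>A\<^esub> d x) \<in> K \<rightarrow> carrier A"
    "(\<lambda>x. emul 0 0 (c x) (d x)) \<in> K \<rightarrow> carrier A"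
    using c d by (auto intro!: emul_closed)
  have "\<pi> (\<lambda>x. c x \<otimes>\<^bsub>A\<^esub> d x) = \<pi> (\<lambda>x. emul 0 0 (c x) (d x))"
    unfolding \<pi>_eq_iff[OF closed] no_diff by simp
  then show "(h \<otimes>\<^bsub>H\<^esub> h', 0) = (h, 0) \<otimes>\<^bsub>red_ext\<^esub> (h', 0)"
    by (simp add: h mult_\<pi>[OF c d] mult_red_ext[OF c d])
qed

lemma snd_hom_red_ext: "snd \<in> hom red_ext Qgroup"
  by (rule homI) (auto simp: red_ext_def)

text \<open>Each identity \<open>s (q + q') = s q \<otimes> s q'\<close> fails at only finitely many coordinates; since \<open>\<rat> \<times> \<rat>\<close>
  is countable and \<open>K\<close> is not, at some coordinate they all hold.\<close>

lemma Q_splits_of_red_ext: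
  assumes "uncountable K" and "Q_splits red_ext"
  shows "Q_splits E"
proof -
  obtain s where s: "s \<in> hom Qgroup red_ext" "\<And>q. snd (s q) = q"
    using assms(2) by (auto simp: Q_splits_def)
  define w where "w q = rep (fst (s q))" for q
  have w: "w q \<in> K \<rightarrow> carrier A" "s q = (\<pi> (w q), q)" for q
  proof -
    have "s q \<in> carrier red_ext" using s(1) by (auto simp: hom_def)
    then obtain c where c: "c \<in> K \<rightarrow> carrier A" "fst (s q) = \<pi> c"
      by (auto simp: carrier_red_ext carrier_H)
    show "w q \<in> K \<rightarrow> carrier A" using rep(1)[OF c(1)] c(2) by (simp add: w_def)
    show "s q = (\<pi> (w q), q)" using rep(2)[OF c(1)] c(2) s(2)[of q] by (simp add: w_def prod_eq_iff)
  qed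
  define B where "B q q' = {x\<in>K. w (q + q') x \<noteq> emul q q' (w q x) (w q' x)}" for q q'
  have "finite (B q q')" for q q'
  proof -
    have "s (q + q') = s q \<otimes>\<^bsub>red_ext\<^esub> s q'" using hom_mult[OF s(1)] by simp
    then have "\<pi> (w (q + q')) = \<pi> (\<lambda>x. emul q q' (w q x) (w q' x))"
      by (simp add: w(2) mult_red_ext[OF w(1) w(1)])
    moreover have "(\<lambda>x. emul q q' (w q x) (w q' x)) \<in> K \<rightarrow> carrier A"
      using w(1)[of q] w(1)[of q'] by (auto intro!: emul_closed)
    ultimately show ?thesis using \<pi>_eq_iff[OF w(1)] by (simp add: B_def)
  qed
  then have "countable (\<Union>q. \<Union>q'. B q q')"
    by (intro countable_UN) (auto intro: countable_finite)
  then have "\<not> K \<subseteq> (\<Union>q. \<Union>q'. B q q')"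
    using assms(1) countable_subset by blast
  then obtain x0 where x0: "x0 \<in> K" "\<And>q q'. x0 \<notin> B q q'"
    by blast
  define \<sigma> where "\<sigma> q = (w q x0, q)" for q
  have "\<sigma> \<in> hom Qgroup E"
  proof (rule homI)
    fix q show "\<sigma> q \<in> carrier E" using w(1) x0(1) by (auto simp: \<sigma>_def carrier_E)
  next
    fix q q'
    have "w q x0 \<in> carrier A" "w q' x0 \<in> carrier A" using w(1) x0(1) by auto
    then show "\<sigma> (q \<otimes>\<^bsub>Qgroup\<^esub> q') = \<sigma> q \<otimes>\<^bsub>E\<^esub> \<sigma> q'"
      using x0 by (simp add: \<sigma>_def mult_E B_def)
  qed
  moreover have "\<forall>q. snd (\<sigma> q) = q" by (simp add: \<sigma>_def)
  ultimately show ?thesis unfolding Q_splits_def by blast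
qed

end

lemma (in reduced_power) not_cotorsion:
  assumes "uncountable K" and "\<not> cotorsion A"
  shows "\<not> cotorsion H"
proof -
  obtain E :: "('a \<times> rat) monoid" where E: "comm_group E" "carrier E = carrier A \<times> UNIV"
    "(\<lambda>a. (a, 0)) \<in> hom A E" "snd \<in> hom E Qgroup" and not_split: "\<not> Q_splits E"
    using assms(2) unfolding cotorsion_iff_Q_splits by blast
  interpret reduced_power_extension A K H \<pi> E
    by (intro reduced_power_extension.intro reduced_power_axioms Q_extension.intro
        Q_extension_axioms.intro A.comm_group_axioms E)
  show ?thesis
    unfolding cotorsion_iff_Q_splits
    using comm_group_red_ext carrier_red_ext incl_hom_red_ext snd_hom_red_ext
      Q_splits_of_red_ext[OF assms(1)] not_split
    by blast
qed


section \<open>The diagram of finite subsets and its homology\<close>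

lemma finprod_nonone_singleton:
  assumes "comm_monoid G" "f a \<in> carrier G"
  shows "finprod G f {x \<in> {a}. f x \<noteq> \<one>\<^bsub>G\<^esub>} = f a"
proof -
  interpret comm_monoid G by (rule assms(1))
  show ?thesis
  proof (cases "f a = \<one>\<^bsub>G\<^esub>")
    case True
    then have "{x \<in> {a}. f x \<noteq> \<one>\<^bsub>G\<^esub>} = {}" by auto
    then show ?thesis using True by (metis finprod_empty)
  next
    case False
    then have "{x \<in> {a}. f x \<noteq> \<one>\<^bsub>G\<^esub>} = {a}" by auto
    then show ?thesis using assms(2) by simp
  qed
qed

lemma smash_map_base: "z0 \<in> Z \<Longrightarrow> smash_map Y Z z0 g A \<phi> z0 = \<one>\<^bsub>A\<^esub>"
  by (simp add: smash_map_def)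

lemma smash_map_nonbase:
  "z \<in> Z \<Longrightarrow> z \<noteq> z0 \<Longrightarrow> smash_map Y Z z0 g A \<phi> z = finprod A \<phi> {y \<in> Y. g y = z \<and> \<phi> y \<noteq> \<one>\<^bsub>A\<^esub>}"
  by (simp add: smash_map_def)

definition label :: "'k set \<Rightarrow> 'k \<Rightarrow> nat" where
  "label S = (SOME h. inj_on h S \<and> 0 \<notin> h ` S)"

lemma label:
  assumes "finite S" shows "inj_on (label S) S" "0 \<notin> label S ` S"
proof -
  obtain g :: "'a \<Rightarrow> nat" and n where "inj_on g S"
    using finite_imp_inj_to_nat_seg[OF assms] by blast
  then have "inj_on (Suc \<circ> g) S \<and> 0 \<notin> (Suc \<circ> g) ` S" by (auto simp: inj_on_def)
  then have "inj_on (label S) S \<and> 0 \<notin> label S ` S"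
    unfolding label_def by (rule someI[where P = "\<lambda>h. inj_on h S \<and> 0 \<notin> h ` S"])
  then show "inj_on (label S) S" "0 \<notin> label S ` S" by auto
qed

text \<open>For \<open>\<beta> : K \<rightarrow> Fpow K\<close>, node \<open>t\<close> carries the pointed set \<open>\<beta> t\<close> plus a base point: the elements of
  \<open>\<beta> t\<close> are encoded by positive labels and the base point by \<open>0\<close>.\<close>

definition node :: "('k \<Rightarrow> 'k set) \<Rightarrow> 'k \<Rightarrow> nat set" where
  "node \<beta> t = insert 0 (label (\<beta> t) ` \<beta> t)"

definition unlabel :: "('k \<Rightarrow> 'k set) \<Rightarrow> 'k \<Rightarrow> nat \<Rightarrow> 'k" where
  "unlabel \<beta> t n = the_inv_into (\<beta> t) (label (\<beta> t)) n"

definition node_map :: "('k \<Rightarrow> 'k set) \<Rightarrow> 'k \<Rightarrow> 'k \<Rightarrow> nat \<Rightarrow> nat" where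
  "node_map \<beta> t s n =
     (if n \<in> label (\<beta> t) ` \<beta> t \<and> unlabel \<beta> t n \<in> \<beta> s then label (\<beta> s) (unlabel \<beta> t n) else 0)"

definition node_le :: "('k \<Rightarrow> 'k set) \<Rightarrow> 'k \<Rightarrow> 'k \<Rightarrow> bool" where
  "node_le \<beta> s t \<longleftrightarrow> \<beta> s \<subseteq> \<beta> t"

locale finite_subset_index =
  fixes K :: "'k set" and \<beta> :: "'k \<Rightarrow> 'k set"
  assumes bij: "bij_betw \<beta> K (Fpow K)"
begin

abbreviation "L t \<equiv> label (\<beta> t)"
abbreviation "D \<equiv> node \<beta>"
abbreviation "fm \<equiv> node_map \<beta>"
abbreviation "leq \<equiv> node_le \<beta>"

definition idx :: "'k set \<Rightarrow> 'k" where
  "idx = the_inv_into K \<beta>"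

lemma finite_beta: "t \<in> K \<Longrightarrow> finite (\<beta> t)"
  and beta_subset: "t \<in> K \<Longrightarrow> \<beta> t \<subseteq> K"
  using bij by (auto simp: bij_betw_def Fpow_def)

lemma idx: "finite S \<Longrightarrow> S \<subseteq> K \<Longrightarrow> idx S \<in> K \<and> \<beta> (idx S) = S"
  unfolding idx_def using bij
  by (metis (no_types, lifting) Fpow_def bij_betw_def f_the_inv_into_f mem_Collect_eq
      the_inv_into_into subset_refl)

lemma idx_singleton: "x \<in> K \<Longrightarrow> idx {x} \<in> K \<and> \<beta> (idx {x}) = {x}"
  using idx by auto

lemma beta_inj: "s \<in> K \<Longrightarrow> t \<in> K \<Longrightarrow> \<beta> s = \<beta> t \<Longrightarrow> s = t"
  using bij by (auto simp: bij_betw_def inj_on_def)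

lemma label_eq_iff: "t \<in> K \<Longrightarrow> x \<in> \<beta> t \<Longrightarrow> y \<in> \<beta> t \<Longrightarrow> L t x = L t y \<longleftrightarrow> x = y"
  using label(1)[OF finite_beta] unfolding inj_on_def by blast

lemma label_nonzero: "t \<in> K \<Longrightarrow> x \<in> \<beta> t \<Longrightarrow> L t x \<noteq> 0"
  using label(2)[OF finite_beta] by force

lemma unlabel_label: "t \<in> K \<Longrightarrow> x \<in> \<beta> t \<Longrightarrow> unlabel \<beta> t (L t x) = x"
  unfolding unlabel_def using label(1)[OF finite_beta] by (simp add: the_inv_into_f_f)

lemma label_in_node: "x \<in> \<beta> t \<Longrightarrow> L t x \<in> D t"
  by (simp add: node_def)

lemma node_cases:
  assumes "n \<in> D t"
  obtains "n = 0" | y where "y \<in> \<beta> t" "n = L t y"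
  using assms unfolding node_def by auto

lemma finite_node: "t \<in> K \<Longrightarrow> finite (D t)"
  unfolding node_def using finite_beta by auto

lemma node_map_label: "t \<in> K \<Longrightarrow> y \<in> \<beta> t \<Longrightarrow> fm t s (L t y) = (if y \<in> \<beta> s then L s y else 0)"
  unfolding node_map_def by (auto simp: unlabel_label)

lemma node_map_0: "t \<in> K \<Longrightarrow> fm t s 0 = 0"
  unfolding node_map_def using label_nonzero by fastforce

lemma directed_poset: "directed_poset K leq"
  unfolding directed_poset_def node_le_def
proof (intro conjI ballI impI)
  show "K \<noteq> {}" using idx[of "{}"] by auto
next
  fix s t assume "s \<in> K" "t \<in> K" "\<beta> s \<subseteq> \<beta> t \<and> \<beta> t \<subseteq> \<beta> s"
  then show "s = t" using beta_inj by blast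
next
  fix s t assume "s \<in> K" "t \<in> K"
  then have "idx (\<beta> s \<union> \<beta> t) \<in> K \<and> \<beta> (idx (\<beta> s \<union> \<beta> t)) = \<beta> s \<union> \<beta> t"
    using idx finite_beta beta_subset by simp
  then show "\<exists>u\<in>K. \<beta> s \<subseteq> \<beta> u \<and> \<beta> t \<subseteq> \<beta> u" by auto
qed auto

lemma finite_pointed_diagram: "finite_pointed_diagram K leq D (\<lambda>_. 0) fm"
  unfolding finite_pointed_diagram_def
proof (intro conjI ballI impI)
  fix t assume t: "t \<in> K"
  show "finite (D t)" using finite_node[OF t] .
  show "0 \<in> D t" by (simp add: node_def)
  fix x assume "x \<in> D t"
  then show "fm t t x = x" by (cases rule: node_cases) (simp_all add: t node_map_0 node_map_label)
next
  fix s t assume st: "s \<in> K" "t \<in> K" "leq s t"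
  show "fm t s 0 = 0" using node_map_0 st by simp
  fix x assume "x \<in> D t"
  then show "fm t s x \<in> D s"
    by (cases rule: node_cases) (auto simp: st node_map_0 node_map_label node_def)
next
  fix r s t assume rst: "r \<in> K" "s \<in> K" "t \<in> K" "leq r s \<and> leq s t"
  fix x assume "x \<in> D t"
  then show "fm s r (fm t s x) = fm t r x"
    by (cases rule: node_cases) (use rst in \<open>auto simp: node_map_0 node_map_label node_le_def\<close>)
qed

lemma node_map_fiber:
  assumes "t \<in> K" "s \<in> K" "\<beta> s \<subseteq> \<beta> t" "y \<in> \<beta> s"
  shows "{n \<in> D t. fm t s n = L s y} = {L t y}"
proof -
  have "n = L t y" if "n \<in> D t" "fm t s n = L s y" for n
    using that(1)
  proof (cases rule: node_cases)
    case 1 then show ?thesis using that assms node_map_0 label_nonzero by auto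
  next
    case (2 z) then show ?thesis
      using that assms node_map_label[OF assms(1)] label_nonzero[OF assms(2,4)] label_eq_iff[OF assms(2)]
      by (auto split: if_splits)
  qed
  moreover have "fm t s (L t y) = L s y" using node_map_label assms by auto
  ultimately show ?thesis using assms by (auto simp: label_in_node)
qed



abbreviation "P \<equiv> plim K leq D fm"
abbreviation "base \<equiv> plim_bp K (\<lambda>_. (0::nat))"

text \<open>The limit consists of the base point and, for each \<open>y \<in> K\<close>, the thread through the labels of \<open>y\<close>.\<close>

definition thread :: "'k \<Rightarrow> 'k \<Rightarrow> nat" where
  "thread y = (\<lambda>t\<in>K. if y \<in> \<beta> t then L t y else 0)"

lemma thread_at: "t \<in> K \<Longrightarrow> thread y t = (if y \<in> \<beta> t then L t y else 0)"
  by (simp add: thread_def)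

lemma thread_in_plim: "thread y \<in> P"
proof -
  have "thread y \<in> (\<Pi>\<^sub>E t\<in>K. D t)" by (auto simp: thread_def node_def)
  moreover have "fm t s (thread y t) = thread y s" if "s \<in> K" "t \<in> K" "leq s t" for s t
    using that node_map_label node_map_0 by (auto simp: thread_def node_le_def)
  ultimately show ?thesis by (simp add: plim_def)
qed

lemma base_in_plim: "base \<in> P"
  using node_map_0 by (auto simp: plim_bp_def plim_def node_def)

lemma plim_eq_thread:
  assumes x: "x \<in> P" and t: "t \<in> K" and y: "y \<in> \<beta> t" and xt: "x t = L t y"
  shows "x = thread y"
proof
  have xD: "x \<in> (\<Pi>\<^sub>E t\<in>K. D t)"
    and compat: "\<And>s t. s \<in> K \<Longrightarrow> t \<in> K \<Longrightarrow> leq s t \<Longrightarrow> fm t s (x t) = x s"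
    using x by (auto simp: plim_def)
  fix s show "x s = thread y s"
  proof (cases "s \<in> K")
    case False then show ?thesis using xD by (auto simp: thread_def)
  next
    case s: True
    define u where "u = idx (\<beta> s \<union> \<beta> t)"
    have u: "u \<in> K" "\<beta> u = \<beta> s \<union> \<beta> t"
      using idx[of "\<beta> s \<union> \<beta> t"] s t finite_beta beta_subset by (auto simp: u_def)
    have "x u \<in> D u" using xD u by auto
    moreover have xut: "fm u t (x u) = L t y" using compat[OF t u(1)] u xt by (auto simp: node_le_def)
    ultimately have "x u = L u y"
    proof (cases rule: node_cases)
      case 1 then show ?thesis using xut node_map_0[OF u(1)] label_nonzero[OF t y] by simp
    next
      case (2 z)
      then have "z \<in> \<beta> t \<and> L t z = L t y"
        using xut node_map_label[OF u(1) 2(1), of t] label_nonzero[OF t y] by (auto split: if_splits)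
      then show ?thesis using 2 label_eq_iff[OF t] y by blast
    qed
    then have "x s = fm u s (L u y)" using compat[OF s u(1)] u by (auto simp: node_le_def)
    also have "\<dots> = thread y s" using node_map_label[OF u(1)] u y thread_at[OF s] by auto
    finally show ?thesis .
  qed
qed

lemma plim_fiber: "t \<in> K \<Longrightarrow> y \<in> \<beta> t \<Longrightarrow> {x \<in> P. x t = L t y} = {thread y}"
  using plim_eq_thread thread_in_plim thread_at by auto

lemma thread_at_singleton:
  assumes "y \<in> K" shows "thread y (idx {y}) \<noteq> 0"
  using idx_singleton[OF assms] thread_at label_nonzero[of "idx {y}" y] by auto

lemma inj_on_thread: "inj_on thread K"
proof
  fix y y' assume "y \<in> K" "y' \<in> K" "thread y = thread y'"
  then have "thread y' (idx {y}) \<noteq> 0" using thread_at_singleton by metis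
  then show "y = y'" using thread_at[of "idx {y}" y'] idx_singleton[OF \<open>y \<in> K\<close>] by (auto split: if_splits)
qed

lemma thread_neq_base: "y \<in> K \<Longrightarrow> thread y \<noteq> base"
  using thread_at_singleton idx_singleton by (force simp: plim_bp_def)

end

locale finite_subset_coefficients = finite_subset_index K \<beta> + A: comm_group A
  for K :: "'k set" and \<beta> and A :: "'a monoid"
begin

abbreviation "G \<equiv> lim_smash_group K leq D (\<lambda>_. 0) fm A"
abbreviation "H \<equiv> H_group K leq D (\<lambda>_. 0) fm A"
abbreviation "\<rho> \<equiv> rho K leq D (\<lambda>_. 0) fm A"

text \<open>The element of \<open>lim (X \<and> A)\<close> corresponding to \<open>g \<in> A\<^sup>K\<close>; \<open>coord\<close> is its inverse.\<close>

definition embed :: "('k \<Rightarrow> 'a) \<Rightarrow> 'k \<Rightarrow> nat \<Rightarrow> 'a" where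
  "embed g = (\<lambda>t\<in>K. \<lambda>n\<in>D t. if n = 0 then \<one>\<^bsub>A\<^esub> else g (unlabel \<beta> t n))"

definition coord :: "('k \<Rightarrow> nat \<Rightarrow> 'a) \<Rightarrow> 'k \<Rightarrow> 'a" where
  "coord a x = a (idx {x}) (L (idx {x}) x)"

lemma embed_label: "t \<in> K \<Longrightarrow> y \<in> \<beta> t \<Longrightarrow> embed g t (L t y) = g y"
  unfolding embed_def by (auto simp: node_def label_nonzero unlabel_label)

lemma embed_0: "t \<in> K \<Longrightarrow> embed g t 0 = \<one>\<^bsub>A\<^esub>"
  unfolding embed_def by (auto simp: node_def)

lemma coord_embed:
  assumes "x \<in> K" shows "coord (embed g) x = g x"
  using idx_singleton[OF assms] embed_label[of "idx {x}" x] by (auto simp: coord_def)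

lemma embed_cong: "(\<And>x. x \<in> K \<Longrightarrow> g x = h x) \<Longrightarrow> embed g = embed h"
proof -
  assume gh: "\<And>x. x \<in> K \<Longrightarrow> g x = h x"
  have "g (unlabel \<beta> t n) = h (unlabel \<beta> t n)" if "t \<in> K" "n \<in> D t" "n \<noteq> 0" for t n
    using that(2)
  proof (cases rule: node_cases)
    case (2 y)
    then have "y \<in> K" using beta_subset that(1) by blast
    then show ?thesis using 2 gh unlabel_label that(1) by simp
  qed (use that in simp)
  then show ?thesis unfolding embed_def by (intro ext) auto
qed

lemma embed_eq_iff: "embed g = embed h \<longleftrightarrow> (\<forall>x\<in>K. g x = h x)"
  using embed_cong coord_embed by metis

lemma mult_embed: "embed g \<otimes>\<^bsub>G\<^esub> embed h = embed (\<lambda>x. g x \<otimes>\<^bsub>A\<^esub> h x)"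
  unfolding embed_def by (auto simp: lim_smash_group_def smash_group_def intro!: ext)

lemma smash_map_embed:
  assumes g: "g \<in> K \<rightarrow> carrier A" and st: "s \<in> K" "t \<in> K" "leq s t"
  shows "smash_map (D t) (D s) 0 (fm t s) A (embed g t) = embed g s"
proof
  fix z show "smash_map (D t) (D s) 0 (fm t s) A (embed g t) z = embed g s z"
  proof (cases "z \<in> D s")
    case False then show ?thesis using st by (simp add: smash_map_def embed_def)
  next
    case True
    then show ?thesis
    proof (cases rule: node_cases)
      case 1 then show ?thesis using st True by (simp add: smash_map_base embed_0)
    next
      case (2 y)
      have yt: "y \<in> \<beta> t" using 2 st by (auto simp: node_le_def)
      have "{n \<in> D t. fm t s n = z \<and> embed g t n \<noteq> \<one>\<^bsub>A\<^esub>} = {n \<in> {L t y}. embed g t n \<noteq> \<one>\<^bsub>A\<^esub>}"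
        using node_map_fiber[OF st(2) st(1) _ 2(1)] st 2 by (auto simp: node_le_def)
      moreover have "embed g t (L t y) \<in> carrier A" using embed_label[OF st(2) yt] g yt beta_subset st by auto
      ultimately have "finprod A (embed g t) {n \<in> D t. fm t s n = z \<and> embed g t n \<noteq> \<one>\<^bsub>A\<^esub>} = g y"
        using finprod_nonone_singleton[OF A.comm_monoid_axioms, of "embed g t" "L t y"]
          embed_label[OF st(2) yt] by simp
      then show ?thesis
        using True 2 st label_nonzero[OF st(1) 2(1)] embed_label[OF st(1) 2(1)]
        by (simp add: smash_map_nonbase)
    qed
  qed
qed

lemma embed_in_carrier: "g \<in> K \<rightarrow> carrier A \<Longrightarrow> embed g \<in> carrier G"
proof -
  assume g: "g \<in> K \<rightarrow> carrier A"
  have "embed g t \<in> smash (D t) 0 A" if t: "t \<in> K" for t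
  proof -
    have "embed g t \<in> D t \<rightarrow>\<^sub>E carrier A"
    proof
      fix n assume "n \<in> D t"
      then show "embed g t n \<in> carrier A"
      proof (cases rule: node_cases)
        case (2 y)
        then have "y \<in> K" using beta_subset t by blast
        then show ?thesis using 2 g embed_label t by auto
      qed (simp add: t embed_0)
    qed (simp add: t embed_def)
    then show ?thesis using embed_0[OF t] finite_node[OF t] by (simp add: smash_def)
  qed
  then have "embed g \<in> (\<Pi>\<^sub>E t\<in>K. smash (D t) 0 A)" by (auto simp: embed_def)
  then show ?thesis using smash_map_embed[OF g] by (simp add: lim_smash_group_def)
qed

text \<open>An element of the limit is determined by its values on singletons, because every \<open>\<beta> t\<close>
  maps onto the singleton node \<open>idx {y}\<close> of each of its elements \<open>y\<close>.\<close>

lemma embed_coord: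
  assumes a: "a \<in> carrier G"
  shows "embed (coord a) = a" "coord a \<in> K \<rightarrow> carrier A"
proof -
  have aP: "a \<in> (\<Pi>\<^sub>E t\<in>K. smash (D t) 0 A)"
    and compat: "\<And>s t. s \<in> K \<Longrightarrow> t \<in> K \<Longrightarrow> leq s t \<Longrightarrow> smash_map (D t) (D s) 0 (fm t s) A (a t) = a s"
    using a by (auto simp: lim_smash_group_def)
  have at: "a t \<in> D t \<rightarrow>\<^sub>E carrier A" "a t 0 = \<one>\<^bsub>A\<^esub>" if "t \<in> K" for t
    using aP that by (auto simp: smash_def)
  show "coord a \<in> K \<rightarrow> carrier A"
    using at(1) idx_singleton label_in_node by (fastforce simp: coord_def)
  have at_label: "a t (L t y) = coord a y" if t: "t \<in> K" and y: "y \<in> \<beta> t" for t y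
  proof -
    define u where "u = idx {y}"
    have u: "u \<in> K" "\<beta> u = {y}" using idx_singleton y beta_subset t by (auto simp: u_def)
    have "\<beta> u \<subseteq> \<beta> t" "y \<in> \<beta> u" using u y by auto
    note fiber = node_map_fiber[OF t u(1) this]
    have "{n \<in> D t. fm t u n = L u y \<and> a t n \<noteq> \<one>\<^bsub>A\<^esub>}
        = {n \<in> {n \<in> D t. fm t u n = L u y}. a t n \<noteq> \<one>\<^bsub>A\<^esub>}" by auto
    also have "\<dots> = {n \<in> {L t y}. a t n \<noteq> \<one>\<^bsub>A\<^esub>}" by (simp only: fiber)
    finally have filtered: "{n \<in> D t. fm t u n = L u y \<and> a t n \<noteq> \<one>\<^bsub>A\<^esub>} = {n \<in> {L t y}. a t n \<noteq> \<one>\<^bsub>A\<^esub>}" .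
    have "coord a y = a u (L u y)" by (simp add: coord_def u_def)
    also have "\<dots> = smash_map (D t) (D u) 0 (fm t u) A (a t) (L u y)"
      using compat[OF u(1) t] u y by (simp add: node_le_def)
    also have "\<dots> = finprod A (a t) {n \<in> D t. fm t u n = L u y \<and> a t n \<noteq> \<one>\<^bsub>A\<^esub>}"
      using u label_in_node[of y u] label_nonzero[of u y] by (simp add: smash_map_nonbase)
    also have "\<dots> = finprod A (a t) {n \<in> {L t y}. a t n \<noteq> \<one>\<^bsub>A\<^esub>}"
      by (simp only: filtered)
    also have "\<dots> = a t (L t y)"
      using at(1)[OF t] y by (intro finprod_nonone_singleton A.comm_monoid_axioms) (auto simp: label_in_node)
    finally show ?thesis by (rule sym)
  qed
  show "embed (coord a) = a"
  proof (intro ext)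
    fix t n show "embed (coord a) t n = a t n"
    proof (cases "t \<in> K")
      case False then show ?thesis by (simp add: embed_def PiE_arb[OF aP False])
    next
      case t: True
      show ?thesis
      proof (cases "n \<in> D t")
        case False then show ?thesis by (simp add: t embed_def PiE_arb[OF at(1)[OF t] False])
      next
        case True
        then show ?thesis
        proof (cases rule: node_cases)
          case 1 then show ?thesis by (simp add: t embed_0 at(2))
        next
          case (2 y) then show ?thesis by (simp add: t embed_label at_label)
        qed
      qed
    qed
  qed
qed

lemma carrier_lim: "carrier G = embed ` (K \<rightarrow> carrier A)"
proof
  show "carrier G \<subseteq> embed ` (K \<rightarrow> carrier A)"
  proof
    fix a assume a: "a \<in> carrier G"
    show "a \<in> embed ` (K \<rightarrow> carrier A)"
      by (rule image_eqI[where f = embed, OF embed_coord(1)[OF a, symmetric] embed_coord(2)[OF a]])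
  qed
  show "embed ` (K \<rightarrow> carrier A) \<subseteq> carrier G" using embed_in_carrier by blast
qed


lemma rho_eq_embed:
  assumes \<psi>: "\<psi> \<in> smash P base A"
  shows "\<rho> \<psi> = embed (\<lambda>y. \<psi> (thread y))"
proof (intro ext)
  have \<psi>P: "\<psi> \<in> P \<rightarrow>\<^sub>E carrier A" using \<psi> by (simp add: smash_def)
  fix t n show "\<rho> \<psi> t n = embed (\<lambda>y. \<psi> (thread y)) t n"
  proof (cases "t \<in> K \<and> n \<in> D t")
    case False then show ?thesis by (auto simp: rho_def embed_def smash_map_def)
  next
    case True
    then have t: "t \<in> K" and n: "n \<in> D t" by auto
    from n show ?thesis
    proof (cases rule: node_cases)
      case 1 then show ?thesis using t by (simp add: rho_def smash_map_base node_def embed_0)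
    next
      case (2 y)
      have "{x \<in> P. x t = n \<and> \<psi> x \<noteq> \<one>\<^bsub>A\<^esub>} = {x \<in> {thread y}. \<psi> x \<noteq> \<one>\<^bsub>A\<^esub>}"
        using plim_fiber[OF t 2(1)] 2(2) by blast
      moreover have "\<psi> (thread y) \<in> carrier A" using \<psi>P thread_in_plim by auto
      ultimately have "finprod A \<psi> {x \<in> P. x t = n \<and> \<psi> x \<noteq> \<one>\<^bsub>A\<^esub>} = \<psi> (thread y)"
        using finprod_nonone_singleton[OF A.comm_monoid_axioms, of \<psi> "thread y"] by simp
      then show ?thesis
        using t n 2 label_nonzero[OF t 2(1)] embed_label[OF t 2(1)]
        by (simp add: rho_def smash_map_nonbase)
    qed
  qed
qed

definition finsupp :: "('k \<Rightarrow> 'a) set" where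
  "finsupp = {g \<in> K \<rightarrow> carrier A. finite {x\<in>K. g x \<noteq> \<one>\<^bsub>A\<^esub>}}"

lemma image_rho: "\<rho> ` smash P base A = embed ` finsupp"
proof
  show "\<rho> ` smash P base A \<subseteq> embed ` finsupp"
  proof
    fix r assume "r \<in> \<rho> ` smash P base A"
    then obtain \<psi> where \<psi>: "\<psi> \<in> smash P base A" and r: "r = \<rho> \<psi>" by auto
    have \<psi>P: "\<psi> \<in> P \<rightarrow>\<^sub>E carrier A" and fin: "finite {x \<in> P. \<psi> x \<noteq> \<one>\<^bsub>A\<^esub>}"
      using \<psi> by (auto simp: smash_def)
    have "thread ` {y \<in> K. \<psi> (thread y) \<noteq> \<one>\<^bsub>A\<^esub>} \<subseteq> {x \<in> P. \<psi> x \<noteq> \<one>\<^bsub>A\<^esub>}"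
      using thread_in_plim by auto
    then have "finite (thread ` {y \<in> K. \<psi> (thread y) \<noteq> \<one>\<^bsub>A\<^esub>})" using fin finite_subset by blast
    moreover have "inj_on thread {y \<in> K. \<psi> (thread y) \<noteq> \<one>\<^bsub>A\<^esub>}"
      by (rule inj_on_subset[OF inj_on_thread]) auto
    ultimately have "finite {y \<in> K. \<psi> (thread y) \<noteq> \<one>\<^bsub>A\<^esub>}" by (rule finite_imageD)
    moreover have "(\<lambda>y. \<psi> (thread y)) \<in> K \<rightarrow> carrier A" using \<psi>P thread_in_plim by auto
    ultimately show "r \<in> embed ` finsupp" using r rho_eq_embed[OF \<psi>] by (auto simp: finsupp_def)
  qed
next
  show "embed ` finsupp \<subseteq> \<rho> ` smash P base A"
  proof
    fix r assume "r \<in> embed ` finsupp"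
    then obtain g where g: "g \<in> K \<rightarrow> carrier A" "finite {x\<in>K. g x \<noteq> \<one>\<^bsub>A\<^esub>}" and r: "r = embed g"
      by (auto simp: finsupp_def)
    define \<psi> where "\<psi> = (\<lambda>x\<in>P. if x \<in> thread ` K then g (inv_into K thread x) else \<one>\<^bsub>A\<^esub>)"
    have \<psi>_thread: "\<psi> (thread y) = g y" if "y \<in> K" for y
      using that thread_in_plim inv_into_f_f[OF inj_on_thread that] by (simp add: \<psi>_def)
    have "\<psi> \<in> P \<rightarrow>\<^sub>E carrier A"
    proof
      fix x assume "x \<in> P"
      show "\<psi> x \<in> carrier A"
      proof (cases "x \<in> thread ` K")
        case True
        then have "inv_into K thread x \<in> K" by (rule inv_into_into)
        then show ?thesis using g(1) True \<open>x \<in> P\<close> by (auto simp: \<psi>_def)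
      next
        case False then show ?thesis using \<open>x \<in> P\<close> by (simp add: \<psi>_def)
      qed
    qed (simp add: \<psi>_def)
    moreover have "base \<notin> thread ` K" using thread_neq_base by force
    then have "\<psi> base = \<one>\<^bsub>A\<^esub>" using base_in_plim by (simp add: \<psi>_def)
    moreover have "{x \<in> P. \<psi> x \<noteq> \<one>\<^bsub>A\<^esub>} \<subseteq> thread ` {x\<in>K. g x \<noteq> \<one>\<^bsub>A\<^esub>}"
    proof
      fix x assume x: "x \<in> {x \<in> P. \<psi> x \<noteq> \<one>\<^bsub>A\<^esub>}"
      then obtain y where "y \<in> K" "x = thread y" by (auto simp: \<psi>_def split: if_splits)
      then show "x \<in> thread ` {x\<in>K. g x \<noteq> \<one>\<^bsub>A\<^esub>}" using x \<psi>_thread by auto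
    qed
    then have "finite {x \<in> P. \<psi> x \<noteq> \<one>\<^bsub>A\<^esub>}" using g(2) finite_subset by blast
    ultimately have \<psi>: "\<psi> \<in> smash P base A" by (simp add: smash_def)
    have "\<rho> \<psi> = embed g" using rho_eq_embed[OF \<psi>] embed_cong[of "\<lambda>y. \<psi> (thread y)" g] \<psi>_thread by simp
    then show "r \<in> \<rho> ` smash P base A" using \<psi> r by (auto intro!: image_eqI[where x = \<psi>])
  qed
qed

definition cls :: "('k \<Rightarrow> 'a) \<Rightarrow> ('k \<Rightarrow> nat \<Rightarrow> 'a) set" where
  "cls c = embed ` {c' \<in> K \<rightarrow> carrier A. finite {x\<in>K. c' x \<noteq> c x}}"

lemma rcoset_eq_cls:
  assumes c: "c \<in> K \<rightarrow> carrier A"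
  shows "embed ` finsupp #>\<^bsub>G\<^esub> embed c = cls c"
proof
  show "embed ` finsupp #>\<^bsub>G\<^esub> embed c \<subseteq> cls c"
  proof
    fix a assume "a \<in> embed ` finsupp #>\<^bsub>G\<^esub> embed c"
    then obtain r where r: "r \<in> finsupp" "a = embed (\<lambda>x. r x \<otimes>\<^bsub>A\<^esub> c x)"
      by (auto simp: r_coset_def mult_embed)
    have "{x\<in>K. r x \<otimes>\<^bsub>A\<^esub> c x \<noteq> c x} \<subseteq> {x\<in>K. r x \<noteq> \<one>\<^bsub>A\<^esub>}" using c by (auto simp: Pi_iff)
    then have "finite {x\<in>K. r x \<otimes>\<^bsub>A\<^esub> c x \<noteq> c x}" using r(1) finite_subset by (auto simp: finsupp_def)
    moreover have "(\<lambda>x. r x \<otimes>\<^bsub>A\<^esub> c x) \<in> K \<rightarrow> carrier A" using r(1) c by (auto simp: finsupp_def)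
    ultimately show "a \<in> cls c" using r(2) by (auto simp: cls_def)
  qed
next
  show "cls c \<subseteq> embed ` finsupp #>\<^bsub>G\<^esub> embed c"
  proof
    fix a assume "a \<in> cls c"
    then obtain c' where c': "c' \<in> K \<rightarrow> carrier A" "finite {x\<in>K. c' x \<noteq> c x}" "a = embed c'"
      by (auto simp: cls_def)
    define r where "r x = c' x \<otimes>\<^bsub>A\<^esub> inv\<^bsub>A\<^esub> c x" for x
    have "{x\<in>K. r x \<noteq> \<one>\<^bsub>A\<^esub>} \<subseteq> {x\<in>K. c' x \<noteq> c x}" using c c'(1) by (auto simp: r_def Pi_iff)
    moreover have "r \<in> K \<rightarrow> carrier A" using c c'(1) by (auto simp: r_def Pi_iff)
    ultimately have "r \<in> finsupp" using c'(2) finite_subset by (auto simp: finsupp_def)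
    moreover have "embed r \<otimes>\<^bsub>G\<^esub> embed c = a"
      unfolding mult_embed c'(3) using c c'(1) by (intro embed_cong) (auto simp: r_def A.m_assoc Pi_iff)
    ultimately show "a \<in> embed ` finsupp #>\<^bsub>G\<^esub> embed c" by (auto simp: r_coset_def)
  qed
qed

lemma carrier_H: "carrier H = cls ` (K \<rightarrow> carrier A)"
proof -
  have "carrier H = (\<Union>a\<in>carrier G. {embed ` finsupp #>\<^bsub>G\<^esub> a})"
    by (simp add: H_group_def FactGroup_def RCOSETS_def image_rho)
  also have "\<dots> = cls ` (K \<rightarrow> carrier A)" by (auto simp: carrier_lim rcoset_eq_cls)
  finally show ?thesis .
qed

lemma embed_in_cls: "c \<in> K \<rightarrow> carrier A \<Longrightarrow> embed c \<in> cls c"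
  unfolding cls_def by auto

lemma cls_eq_iff:
  assumes c: "c \<in> K \<rightarrow> carrier A"
  shows "cls c = cls d \<longleftrightarrow> finite {x\<in>K. c x \<noteq> d x}"
proof
  assume "cls c = cls d"
  then have "embed c \<in> cls d" using embed_in_cls[OF c] by simp
  then obtain d' where d': "finite {x\<in>K. d' x \<noteq> d x}" "embed c = embed d'"
    by (auto simp: cls_def)
  then have "{x\<in>K. c x \<noteq> d x} = {x\<in>K. d' x \<noteq> d x}" using embed_eq_iff by auto
  then show "finite {x\<in>K. c x \<noteq> d x}" using d'(1) by simp
next
  assume fin: "finite {x\<in>K. c x \<noteq> d x}"
  have "finite {x\<in>K. e x \<noteq> c x} \<longleftrightarrow> finite {x\<in>K. e x \<noteq> d x}" for e
  proof
    assume "finite {x\<in>K. e x \<noteq> c x}"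
    moreover have "{x\<in>K. e x \<noteq> d x} \<subseteq> {x\<in>K. e x \<noteq> c x} \<union> {x\<in>K. c x \<noteq> d x}" by auto
    ultimately show "finite {x\<in>K. e x \<noteq> d x}" using fin finite_subset by blast
  next
    assume "finite {x\<in>K. e x \<noteq> d x}"
    moreover have "{x\<in>K. e x \<noteq> c x} \<subseteq> {x\<in>K. e x \<noteq> d x} \<union> {x\<in>K. c x \<noteq> d x}" by auto
    ultimately show "finite {x\<in>K. e x \<noteq> c x}" using fin finite_subset by blast
  qed
  then show "cls c = cls d" by (simp add: cls_def)
qed

lemma mult_cls:
  assumes c: "c \<in> K \<rightarrow> carrier A" and d: "d \<in> K \<rightarrow> carrier A"
  shows "cls c \<otimes>\<^bsub>H\<^esub> cls d = cls (\<lambda>x. c x \<otimes>\<^bsub>A\<^esub> d x)"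
  unfolding H_group_def FactGroup_def monoid.simps
proof
  show "cls c <#>\<^bsub>G\<^esub> cls d \<subseteq> cls (\<lambda>x. c x \<otimes>\<^bsub>A\<^esub> d x)"
  proof
    fix a assume "a \<in> cls c <#>\<^bsub>G\<^esub> cls d"
    then obtain c' d' where c': "c' \<in> K \<rightarrow> carrier A" "finite {x\<in>K. c' x \<noteq> c x}"
      and d': "d' \<in> K \<rightarrow> carrier A" "finite {x\<in>K. d' x \<noteq> d x}"
      and a: "a = embed c' \<otimes>\<^bsub>G\<^esub> embed d'"
      by (auto simp: set_mult_def cls_def)
    have "{x\<in>K. c' x \<otimes>\<^bsub>A\<^esub> d' x \<noteq> c x \<otimes>\<^bsub>A\<^esub> d x} \<subseteq> {x\<in>K. c' x \<noteq> c x} \<union> {x\<in>K. d' x \<noteq> d x}"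
      by auto
    then have "finite {x\<in>K. c' x \<otimes>\<^bsub>A\<^esub> d' x \<noteq> c x \<otimes>\<^bsub>A\<^esub> d x}"
      using c'(2) d'(2) finite_subset by blast
    moreover have "(\<lambda>x. c' x \<otimes>\<^bsub>A\<^esub> d' x) \<in> K \<rightarrow> carrier A" using c'(1) d'(1) by auto
    ultimately show "a \<in> cls (\<lambda>x. c x \<otimes>\<^bsub>A\<^esub> d x)" using a mult_embed by (auto simp: cls_def)
  qed
next
  show "cls (\<lambda>x. c x \<otimes>\<^bsub>A\<^esub> d x) \<subseteq> cls c <#>\<^bsub>G\<^esub> cls d"
  proof
    fix a assume "a \<in> cls (\<lambda>x. c x \<otimes>\<^bsub>A\<^esub> d x)"
    then obtain e where e: "e \<in> K \<rightarrow> carrier A" "finite {x\<in>K. e x \<noteq> c x \<otimes>\<^bsub>A\<^esub> d x}" "a = embed e"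
      by (auto simp: cls_def)
    define c' where "c' x = e x \<otimes>\<^bsub>A\<^esub> inv\<^bsub>A\<^esub> d x" for x
    have "c' \<in> K \<rightarrow> carrier A" using e(1) d by (auto simp: c'_def Pi_iff)
    moreover have "{x\<in>K. c' x \<noteq> c x} \<subseteq> {x\<in>K. e x \<noteq> c x \<otimes>\<^bsub>A\<^esub> d x}"
      using c d by (auto simp: c'_def Pi_iff A.m_assoc)
    then have "finite {x\<in>K. c' x \<noteq> c x}" using e(2) finite_subset by blast
    ultimately have "embed c' \<in> cls c" by (auto simp: cls_def)
    moreover have "embed c' \<otimes>\<^bsub>G\<^esub> embed d = a"
      unfolding mult_embed e(3) using e(1) d by (intro embed_cong) (auto simp: c'_def A.m_assoc Pi_iff)
    ultimately show "a \<in> cls c <#>\<^bsub>G\<^esub> cls d"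
      using embed_in_cls[OF d] unfolding set_mult_def by blast
  qed
qed

lemma reduced_power_H: "reduced_power A K H cls"
  by (intro reduced_power.intro reduced_power_axioms.intro A.comm_group_axioms)
    (simp_all add: carrier_H mult_cls cls_eq_iff)

end

theorem mainTheorem20:
  fixes A :: "'a monoid" and K :: "'k set"
  assumes "comm_group A"
    and "\<not> cotorsion A"
    and "uncountable K"
  shows "\<exists>(T :: 'k set) (leq :: 'k \<Rightarrow> 'k \<Rightarrow> bool) (D :: 'k \<Rightarrow> nat set) (bp :: 'k \<Rightarrow> nat)
            (f :: 'k \<Rightarrow> 'k \<Rightarrow> nat \<Rightarrow> nat).
           directed_poset T leq \<and> T \<approx> K \<and> finite_pointed_diagram T leq D bp f
           \<and> \<not> cotorsion (H_group T leq D bp f A)"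
proof -
  have "infinite K" using assms(3) uncountable_infinite by blast
  then obtain \<beta> where \<beta>: "bij_betw \<beta> K (Fpow K)"
    using eqpoll_Fpow eqpoll_sym unfolding eqpoll_def by blast
  interpret finite_subset_coefficients K \<beta> A
    by (intro finite_subset_coefficients.intro finite_subset_index.intro \<beta> assms(1))
  interpret reduced_power A K H cls by (rule reduced_power_H)
  have "\<not> cotorsion H" using not_cotorsion assms(2,3) by blast
  then show ?thesis using directed_poset finite_pointed_diagram eqpoll_refl by blast
qed

end
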